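(* Let $m\in\mathbb{N}^\ast$, $\theta>0$ and $\varphi\in\Gamma_1$. Let $(v_i)_{i\ge1}$ be a sequence of positive real numbers with $\sum_{i\ge1}v_i<\infty$. Let $G_1,\dots,G_m$ be random variables with $\mathbb{E}[G_i]=0$ and $\mathrm{Var}[G_i]=v_i/(1+\theta)$, set $X_m=\psi(\varphi)+\sum_{i=1}^mG_ie_i$ and $w_m^{\mathrm{MZW}}(\cdot;\theta)=\psi^{-1}(X_m)$, i.e. $w_m^{\mathrm{MZW}}(t;\theta)=\frac{\int_0^t\varphi'(s)\exp(\sum_{i=1}^mG_ie_i(s))ds}{\int_0^1\varphi'(\tau)\exp(\sum_{i=1}^mG_ie_i(\tau))d\tau}$. Then $w_m^{\mathrm{MZW}}(\cdot;\theta)$ has a unique Fréchet mean in $\Gamma_1$ for the distance associated with $\langle\cdot,\cdot\rangle_{\Gamma_1}$, namely $\varphi$, i.e. $\varphi$ is the unique minimizer over $\check\varphi\in\Gamma_1$ of $\mathbb{E}[\|w_m^{\mathrm{MZW}}(\cdot;\theta)\ominus_{\Gamma_1}\check\varphi\|_{\Gamma_1}^2]$, and the associated Fréchet variance is $\mathbb{E}\big[\|w_m^{\mathrm{MZW}}(\cdot;\theta)\ominus_{\Gamma_1}\varphi\|_{\Gamma_1}^2\big]=\mathbb{E}\big[\|X_m-\psi(\varphi)\|^2\big]=\frac{1}{1+\theta}\sum_{i=1}^mv_i$, where $\|h\|^2=\int_0^1h^2$.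
   Context: $\Gamma_1$ is the set of functions $\gamma:[0,1]\to[0,1]$ with $\gamma(0)=0$, $\gamma(1)=1$, increasing, continuous, differentiable at every point of $[0,1]$, and such that there exist constants $0<m_\gamma<M_\gamma<\infty$ with $m_\gamma<\gamma'<M_\gamma$ on $[0,1]$. On $\Gamma_1$: $f\oplus_{\Gamma_1}g=\frac{\int_0^\cdot f'g'}{\int_0^1f'g'}$; $\alpha\odot_{\Gamma_1}f=\frac{\int_0^\cdot (f')^\alpha}{\int_0^1(f')^\alpha}$ for $\alpha\in\mathbb{R}$; $f\ominus_{\Gamma_1}g=f\oplus_{\Gamma_1}[(-1)\odot_{\Gamma_1}g]$; inner product $\langle f,g\rangle_{\Gamma_1}=\int_0^1\log f'\log g'-\int_0^1\log f'\int_0^1\log g'$, with norm $\|f\|_{\Gamma_1}^2=\langle f,f\rangle_{\Gamma_1}$. The map $\psi:\Gamma_1\to L^2([0,1])$ is $\psi(\varphi)=\log\varphi'-\int_0^1\log\varphi'$, with inverse on bounded mean-zero functions $\psi^{-1}(h)=\frac{\int_0^\cdot e^{h(s)}ds}{\int_0^1e^{h(\tau)}d\tau}$. $(e_i)_{i\ge1}$ denotes the Fourier orthonormal basis of $L^2([0,1])$ (functions $\sqrt2\cos(2\pi kt)$, $\sqrt2\sin(2\pi kt)$, $k\ge1$) with the constant function $1$ removed. *)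

theory Defs
  imports "HOL-Probability.Probability"
begin

definition gderiv :: "(real \<Rightarrow> real) \<Rightarrow> real \<Rightarrow> real" where
  "gderiv f t = vector_derivative f (at t within {0..1})"

definition Gamma1 :: "(real \<Rightarrow> real) set" where
  "Gamma1 = {\<gamma>. \<gamma> 0 = 0 \<and> \<gamma> 1 = 1 \<and> mono_on {0..1} \<gamma> \<and> continuous_on {0..1} \<gamma>
     \<and> (\<forall>t\<in>{0..1}. \<gamma> differentiable (at t within {0..1}))
     \<and> (\<exists>m M. 0 < m \<and> m < M \<and> (\<forall>t\<in>{0..1}. m < gderiv \<gamma> t \<and> gderiv \<gamma> t < M))}"

definition gplus :: "(real \<Rightarrow> real) \<Rightarrow> (real \<Rightarrow> real) \<Rightarrow> real \<Rightarrow> real" where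
  "gplus f g = (\<lambda>t. integral {0..t} (\<lambda>s. gderiv f s * gderiv g s)
                    / integral {0..1} (\<lambda>s. gderiv f s * gderiv g s))"

definition gscale :: "real \<Rightarrow> (real \<Rightarrow> real) \<Rightarrow> real \<Rightarrow> real" where
  "gscale \<alpha> f = (\<lambda>t. integral {0..t} (\<lambda>s. gderiv f s powr \<alpha>)
                    / integral {0..1} (\<lambda>s. gderiv f s powr \<alpha>))"

definition gminus :: "(real \<Rightarrow> real) \<Rightarrow> (real \<Rightarrow> real) \<Rightarrow> real \<Rightarrow> real" where
  "gminus f g = gplus f (gscale (-1) g)"

definition ginner :: "(real \<Rightarrow> real) \<Rightarrow> (real \<Rightarrow> real) \<Rightarrow> real" where
  "ginner f g = integral {0..1} (\<lambda>s. ln (gderiv f s) * ln (gderiv g s))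
      - integral {0..1} (\<lambda>s. ln (gderiv f s)) * integral {0..1} (\<lambda>s. ln (gderiv g s))"

definition gnorm_sq :: "(real \<Rightarrow> real) \<Rightarrow> real" where
  "gnorm_sq f = ginner f f"

definition psi :: "(real \<Rightarrow> real) \<Rightarrow> real \<Rightarrow> real" where
  "psi \<phi> = (\<lambda>t. ln (gderiv \<phi> t) - integral {0..1} (\<lambda>s. ln (gderiv \<phi> s)))"

definition psi_inv :: "(real \<Rightarrow> real) \<Rightarrow> real \<Rightarrow> real" where
  "psi_inv h = (\<lambda>t. integral {0..t} (\<lambda>s. exp (h s)) / integral {0..1} (\<lambda>s. exp (h s)))"

text \<open>Fourier basis without the constant: e_(2k-1) = sqrt 2 cos(2 pi k t),
  e_(2k) = sqrt 2 sin(2 pi k t), k >= 1.\<close>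
definition fourier_e :: "nat \<Rightarrow> real \<Rightarrow> real" where
  "fourier_e i t = (let k = real ((i + 1) div 2) in
     if odd i then sqrt 2 * cos (2 * pi * k * t) else sqrt 2 * sin (2 * pi * k * t))"

definition l2_norm_sq :: "(real \<Rightarrow> real) \<Rightarrow> real" where
  "l2_norm_sq h = integral {0..1} (\<lambda>s. (h s)\<^sup>2)"

definition Xm :: "(real \<Rightarrow> real) \<Rightarrow> (nat \<Rightarrow> 'a \<Rightarrow> real) \<Rightarrow> nat \<Rightarrow> 'a \<Rightarrow> real \<Rightarrow> real" where
  "Xm \<phi> G m \<omega> = (\<lambda>t. psi \<phi> t + (\<Sum>i=1..m. G i \<omega> * fourier_e i t))"

definition wMZW :: "(real \<Rightarrow> real) \<Rightarrow> (nat \<Rightarrow> 'a \<Rightarrow> real) \<Rightarrow> nat \<Rightarrow> 'a \<Rightarrow> real \<Rightarrow> real" where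
  "wMZW \<phi> G m \<omega> = (\<lambda>t.
     integral {0..t} (\<lambda>s. gderiv \<phi> s * exp (\<Sum>i=1..m. G i \<omega> * fourier_e i s))
   / integral {0..1} (\<lambda>s. gderiv \<phi> s * exp (\<Sum>i=1..m. G i \<omega> * fourier_e i s)))"

end

theory Submission
  imports Defs
begin

(* The operations of Gamma_1 and w_m^MZW are all normalized primitives
   t |-> integral {0..t} q / integral {0..1} q of some q > 0, and by Lebesgue's differentiation
   theorem such a primitive has derivative q / integral q almost everywhere. So log-derivatives
   simply add up to constants: ln (w_m (-) phi_c)' = a + S + const a.e., where
   a = ln phi' - ln phi_c' and S = sum G_i e_i. The squared norm is the variance over [0,1] of
   the log-derivative, which ignores constants; since the e_i are orthonormal with mean zero,
     |w_m (-) phi_c|^2 = Var a + 2 sum G_i <a, e_i> + sum G_i^2,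
   whose expectation is Var a + sum v_i / (1 + theta). Var a = 0 makes phi' proportional to
   phi_c' almost everywhere, and then phi_c = phi because both run from 0 to 1. *)

section \<open>Lebesgue differentiation\<close>

lemma integral_right_average_tendsto_ae:
  fixes f :: "real \<Rightarrow> real"
  assumes "\<And>a b. f integrable_on {a..b}"
  obtains N where "negligible N"
    "\<And>x. x \<notin> N \<Longrightarrow> ((\<lambda>h. integral {x..x + h} f / h) \<longlongrightarrow> f x) (at_right 0)"
proof -
  obtain N where N: "negligible N" and avg: "\<And>x e. \<lbrakk>x \<notin> N; 0 < e\<rbrakk> \<Longrightarrow>
      \<exists>d>0. \<forall>h. 0 < h \<and> h < d \<longrightarrow> norm (integral (cbox x (x + h *\<^sub>R One)) f /\<^sub>R h ^ DIM(real) - f x) < e"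
    using integrable_ccontinuous_explicit[of f] assms by (metis box_real(2))
  show ?thesis
  proof (rule that[OF N])
    fix x assume "x \<notin> N"
    show "((\<lambda>h. integral {x..x + h} f / h) \<longlongrightarrow> f x) (at_right 0)"
      unfolding tendsto_iff eventually_at_right_field
    proof (intro allI impI)
      fix e :: real assume "0 < e"
      with avg[OF \<open>x \<notin> N\<close>] obtain d where "d > 0"
        and "\<forall>h. 0 < h \<and> h < d \<longrightarrow> \<bar>integral {x..x + h} f / h - f x\<bar> < e"
        by (auto simp: divide_inverse mult.commute)
      then show "\<exists>b>0. \<forall>h>0. h < b \<longrightarrow> dist (integral {x..x + h} f / h) (f x) < e"
        by (auto simp: dist_real_def)
    qed
  qed
qed

lemma integral_left_average_tendsto_ae:
  fixes f :: "real \<Rightarrow> real"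
  assumes "\<And>a b. f integrable_on {a..b}"
  obtains N where "negligible N"
    "\<And>x. x \<notin> N \<Longrightarrow> ((\<lambda>h. integral {x - h..x} f / h) \<longlongrightarrow> f x) (at_right 0)"
proof -
  have "(\<lambda>x. f (- x)) integrable_on {a..b}" for a b
    using Henstock_Kurzweil_Integration.integrable_reflect_real[of f "-a" "-b"] assms by simp
  then obtain N where N: "negligible N"
    and right: "\<And>x. x \<notin> N \<Longrightarrow> ((\<lambda>h. integral {x..x + h} (\<lambda>x. f (- x)) / h) \<longlongrightarrow> f (- x)) (at_right 0)"
    using integral_right_average_tendsto_ae by blast
  show ?thesis
  proof (rule that)
    show "negligible (uminus ` N)"
      using N by (intro negligible_differentiable_image_negligible) (auto intro!: derivative_intros)
    fix x assume "x \<notin> uminus ` N"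
    then have "- x \<notin> N" by (metis image_eqI minus_minus)
    moreover have "integral {- x..h - x} (\<lambda>x. f (- x)) = integral {x - h..x} f" for h
      by (metis Henstock_Kurzweil_Integration.integral_reflect_real minus_diff_eq)
    ultimately show "((\<lambda>h. integral {x - h..x} f / h) \<longlongrightarrow> f x) (at_right 0)"
      using right[of "- x"] by simp
  qed
qed

lemma indefinite_integral_has_real_derivative_ae:
  fixes f :: "real \<Rightarrow> real"
  assumes f: "\<And>a b. f integrable_on {a..b}"
  obtains N where "negligible N"
    "\<And>x. x \<notin> N \<Longrightarrow> a < x \<Longrightarrow> ((\<lambda>t. integral {a..t} f) has_real_derivative f x) (at x)"
proof -
  obtain N1 where N1: "negligible N1"
    and right: "\<And>x. x \<notin> N1 \<Longrightarrow> ((\<lambda>h. integral {x..x + h} f / h) \<longlongrightarrow> f x) (at_right 0)"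
    using integral_right_average_tendsto_ae f by blast
  obtain N2 where N2: "negligible N2"
    and left: "\<And>x. x \<notin> N2 \<Longrightarrow> ((\<lambda>h. integral {x - h..x} f / h) \<longlongrightarrow> f x) (at_right 0)"
    using integral_left_average_tendsto_ae f by blast
  show ?thesis
  proof (rule that)
    show "negligible (N1 \<union> N2)" using N1 N2 by simp
    fix x assume x: "x \<notin> N1 \<union> N2" "a < x"
    define F where "F t = integral {a..t} f" for t
    have split: "F s + integral {s..t} f = F t" if "a \<le> s" "s \<le> t" for s t
      unfolding F_def using that f by (intro Henstock_Kurzweil_Integration.integral_combine) auto
    have "((\<lambda>h. (F (x + h) - F x) / h) \<longlongrightarrow> f x) (at_right 0)"
    proof (rule Lim_transform_eventually[OF right])
      show "\<forall>\<^sub>F h in at_right 0. integral {x..x + h} f / h = (F (x + h) - F x) / h"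
        using split[of x] x(2) by (intro eventually_at_rightI[of 0 1]) (auto simp: algebra_simps)
    qed (use x in auto)
    moreover have "((\<lambda>h. (F (x - h) - F x) / - h) \<longlongrightarrow> f x) (at_right 0)"
    proof (rule Lim_transform_eventually[OF left])
      show "\<forall>\<^sub>F h in at_right 0. integral {x - h..x} f / h = (F (x - h) - F x) / - h"
        using split[of _ x] x(2)
        by (intro eventually_at_rightI[of 0 "x - a"]) (auto simp: field_simps)
    qed (use x in auto)
    ultimately show "((\<lambda>t. integral {a..t} f) has_real_derivative f x) (at x)"
      unfolding DERIV_def F_def[symmetric]
      by (intro filterlim_split_at_real) (simp_all add: filterlim_at_left_to_right[of _ _ 0])
  qed
qed

definition bounded_measurable01 :: "(real \<Rightarrow> real) \<Rightarrow> bool" where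
  "bounded_measurable01 f \<longleftrightarrow>
     f \<in> borel_measurable (lebesgue_on {0..1}) \<and> (\<exists>B. \<forall>x\<in>{0..1}. \<bar>f x\<bar> \<le> B)"

lemma bounded_measurable01_integrable_on:
  "bounded_measurable01 f \<Longrightarrow> f integrable_on {0..1}"
  unfolding bounded_measurable01_def
  by (elim conjE exE, rule measurable_bounded_by_integrable_imp_integrable_real) auto

lemma bounded_measurable01_lebesgue_integrable:
  "bounded_measurable01 f \<Longrightarrow> integrable (lebesgue_on {0..1}) f"
  unfolding bounded_measurable01_def
  by (elim conjE exE, rule measurable_bounded_by_integrable_imp_lebesgue_integrable) auto

lemma bounded_measurable01_continuous_on:
  assumes "continuous_on {0..1} f"
  shows "bounded_measurable01 f"
proof -
  have "bounded (f ` {0..1})"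
    using assms by (intro compact_imp_bounded compact_continuous_image) auto
  then show ?thesis
    unfolding bounded_measurable01_def bounded_real
    using continuous_imp_measurable_on_sets_lebesgue[OF assms] by auto
qed

lemma bounded_measurable01_const: "bounded_measurable01 (\<lambda>x. c)"
  by (rule bounded_measurable01_continuous_on) auto

lemma bounded_measurable01_add:
  assumes "bounded_measurable01 f" "bounded_measurable01 g"
  shows "bounded_measurable01 (\<lambda>x. f x + g x)"
proof -
  obtain B C where "\<forall>x\<in>{0..1}. \<bar>f x\<bar> \<le> B" "\<forall>x\<in>{0..1}. \<bar>g x\<bar> \<le> C"
    using assms unfolding bounded_measurable01_def by blast
  then have "\<forall>x\<in>{0..1}. \<bar>f x + g x\<bar> \<le> B + C" by (auto intro!: order.trans[OF abs_triangle_ineq] add_mono)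
  then show ?thesis using assms unfolding bounded_measurable01_def by auto
qed

lemma bounded_measurable01_mult:
  assumes "bounded_measurable01 f" "bounded_measurable01 g"
  shows "bounded_measurable01 (\<lambda>x. f x * g x)"
proof -
  obtain B C where "\<forall>x\<in>{0..1}. \<bar>f x\<bar> \<le> B" "\<forall>x\<in>{0..1}. \<bar>g x\<bar> \<le> C"
    using assms unfolding bounded_measurable01_def by blast
  then have "\<forall>x\<in>{0..1}. \<bar>f x * g x\<bar> \<le> B * C"
    unfolding abs_mult by (auto intro: mult_mono order.trans[OF abs_ge_zero])
  then show ?thesis using assms unfolding bounded_measurable01_def by auto
qed

lemma bounded_measurable01_diff:
  assumes "bounded_measurable01 f" "bounded_measurable01 g"
  shows "bounded_measurable01 (\<lambda>x. f x - g x)"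
  using bounded_measurable01_add[OF assms(1)
      bounded_measurable01_mult[OF bounded_measurable01_const[of "-1"] assms(2)]]
  by simp

lemma bounded_measurable01_exp:
  assumes "bounded_measurable01 h"
  shows "bounded_measurable01 (\<lambda>x. exp (h x))"
proof -
  obtain B where "\<forall>x\<in>{0..1}. \<bar>h x\<bar> \<le> B"
    using assms unfolding bounded_measurable01_def by blast
  then have "\<forall>x\<in>{0..1}. \<bar>exp (h x)\<bar> \<le> exp B" by auto
  then show ?thesis using assms unfolding bounded_measurable01_def by auto
qed

lemma integral_ge_const01:
  assumes "bounded_measurable01 f" "\<And>x. x \<in> {0..1} \<Longrightarrow> c \<le> f x"
  shows "c \<le> integral {0..1} f"
proof -
  have "integral {0..1} (\<lambda>x::real. c) \<le> integral {0..1} f"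
    using assms by (intro Henstock_Kurzweil_Integration.integral_le bounded_measurable01_integrable_on)
      (auto simp: bounded_measurable01_const)
  then show ?thesis by simp
qed

text \<open>\<^const>\<open>ginner\<close> f g is the covariance of the log-derivatives of f and g.\<close>

definition cov01 :: "(real \<Rightarrow> real) \<Rightarrow> (real \<Rightarrow> real) \<Rightarrow> real" where
  "cov01 a b = integral {0..1} (\<lambda>s. a s * b s) - integral {0..1} a * integral {0..1} b"

lemma cov01_cong_ae:
  assumes "negligible N" "\<And>s. s \<in> {0..1} - N \<Longrightarrow> a s = a' s" "\<And>s. s \<in> {0..1} - N \<Longrightarrow> b s = b' s"
  shows "cov01 a b = cov01 a' b'"
proof -
  have "integral {0..1} (\<lambda>s. a s * b s) = integral {0..1} (\<lambda>s. a' s * b' s)"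
    by (rule integral_spike[OF assms(1)]) (simp add: assms(2,3))
  moreover have "integral {0..1} a = integral {0..1} a'" "integral {0..1} b = integral {0..1} b'"
    by (rule integral_spike[OF assms(1)], simp add: assms(2,3))+
  ultimately show ?thesis unfolding cov01_def by simp
qed

lemma cov01_const_right [simp]: "cov01 a (\<lambda>s. c) = 0"
  unfolding cov01_def by simp

lemma cov01_add_self:
  assumes a: "bounded_measurable01 a" and b: "bounded_measurable01 b"
  shows "cov01 (\<lambda>s. a s + b s) (\<lambda>s. a s + b s) = cov01 a a + 2 * cov01 a b + cov01 b b"
proof -
  have ab: "bounded_measurable01 (\<lambda>s. a s * a s)" "bounded_measurable01 (\<lambda>s. a s * b s)"
    "bounded_measurable01 (\<lambda>s. b s * b s)"
    using a b by (auto intro: bounded_measurable01_mult)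
  have "((\<lambda>s. a s * a s + 2 * (a s * b s) + b s * b s) has_integral integral {0..1} (\<lambda>s. a s * a s)
      + 2 * integral {0..1} (\<lambda>s. a s * b s) + integral {0..1} (\<lambda>s. b s * b s)) {0..1}"
    using ab by (intro has_integral_add has_integral_mult_right integrable_integral
        bounded_measurable01_integrable_on)
  moreover have "(\<lambda>s. a s * a s + 2 * (a s * b s) + b s * b s) = (\<lambda>s. (a s + b s) * (a s + b s))"
    by (simp add: fun_eq_iff algebra_simps)
  moreover have "((\<lambda>s. a s + b s) has_integral integral {0..1} a + integral {0..1} b) {0..1}"
    using a b by (intro has_integral_add integrable_integral bounded_measurable01_integrable_on)
  ultimately show ?thesis unfolding cov01_def by (simp add: integral_unique algebra_simps)
qed

lemma cov01_self_has_integral: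
  assumes "bounded_measurable01 a"
  shows "((\<lambda>s. (a s - integral {0..1} a)\<^sup>2) has_integral cov01 a a) {0..1}"
proof -
  define A where "A = integral {0..1} a"
  have "((\<lambda>s. a s * a s - (2 * A) * a s + A * A) has_integral
      (integral {0..1} (\<lambda>s. a s * a s) - (2 * A) * A + A * A)) {0..1}"
    using assms unfolding A_def
    by (intro has_integral_add has_integral_diff has_integral_mult_right integrable_integral
        bounded_measurable01_integrable_on bounded_measurable01_mult has_integral_const_real[of _ 0 1, simplified])
  moreover have "(\<lambda>s. a s * a s - (2 * A) * a s + A * A) = (\<lambda>s. (a s - A)\<^sup>2)"
    by (simp add: fun_eq_iff power2_eq_square algebra_simps)
  ultimately show ?thesis unfolding cov01_def A_def[symmetric] by (simp add: algebra_simps)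
qed

lemma cov01_self_nonneg: "bounded_measurable01 a \<Longrightarrow> 0 \<le> cov01 a a"
  using has_integral_nonneg[OF cov01_self_has_integral] by simp

lemma cov01_self_eq_0_imp_const_ae:
  assumes a: "bounded_measurable01 a" and "cov01 a a = 0"
  obtains N where "negligible N" "\<And>s. s \<in> {0..1} - N \<Longrightarrow> a s = integral {0..1} a"
proof -
  define f where "f = (\<lambda>s. (a s - integral {0..1} a)\<^sup>2)"
  have f: "integrable (lebesgue_on {0..1}) f"
    unfolding f_def power2_eq_square using a
    by (intro bounded_measurable01_lebesgue_integrable bounded_measurable01_mult
        bounded_measurable01_diff bounded_measurable01_const)
  have "integral\<^sup>L (lebesgue_on {0..1}) f = 0"
    using lebesgue_integral_eq_integral[OF f] cov01_self_has_integral[OF a] assms(2)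
    by (simp add: f_def integral_unique)
  then have "AE s in lebesgue_on {0..1}. f s = 0"
    using integral_nonneg_eq_0_iff_AE[OF f] by (simp add: f_def)
  then obtain N where N: "{s \<in> {0..1}. f s \<noteq> 0} \<subseteq> N" "N \<in> null_sets (lebesgue_on {0..1})"
    by (elim AE_E3) (auto simp: subset_iff)
  then have "negligible N"
    using null_sets_restrict_space[of "{0..1::real}" lebesgue N] by (auto simp: negligible_iff_null_sets)
  moreover have "a s = integral {0..1} a" if "s \<in> {0..1} - N" for s
    using N(1) that by (auto simp: f_def)
  ultimately show ?thesis using that by blast
qed

section \<open>The Fourier basis\<close>

definition fourier_freq :: "nat \<Rightarrow> nat" where
  "fourier_freq i = (i + 1) div 2"

text \<open>Since sin x = cos (x - pi / 2), every basis function is a shifted cosine.\<close>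

definition fourier_phase :: "nat \<Rightarrow> real" where
  "fourier_phase i = (if odd i then 0 else pi / 2)"

lemma fourier_e_eq_cos:
  "fourier_e i t = sqrt 2 * cos (2 * pi * real (fourier_freq i) * t - fourier_phase i)"
  unfolding fourier_e_def fourier_freq_def fourier_phase_def Let_def by (simp add: cos_diff)

lemma cos_has_integral_01:
  "((\<lambda>t. cos (2 * pi * of_int n * t + c)) has_integral (if n = 0 then cos c else 0)) {0..1}"
proof (cases "n = 0")
  case False
  have "((\<lambda>t. sin (2 * pi * of_int n * t + c) / (2 * pi * of_int n)) has_real_derivative
      cos (2 * pi * of_int n * t + c)) (at t within {0..1})" for t
    using False by (auto intro!: derivative_eq_intros)
  then have "((\<lambda>t. cos (2 * pi * of_int n * t + c)) has_integral
      sin (2 * pi * of_int n * 1 + c) / (2 * pi * of_int n) - sin (2 * pi * of_int n * 0 + c) / (2 * pi * of_int n))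
      {0..1}"
    by (intro fundamental_theorem_of_calculus) (auto simp: has_real_derivative_iff_has_vector_derivative)
  then show ?thesis using False by (simp add: sin_add)
qed (use has_integral_const_real[of "cos c" 0 1] in simp)

lemma fourier_e_has_integral: "(fourier_e i has_integral 0) {0..1}"
proof -
  have "((\<lambda>t. sqrt 2 * cos (2 * pi * of_int (int (fourier_freq i)) * t + - fourier_phase i)) has_integral
      sqrt 2 * (if int (fourier_freq i) = 0 then cos (- fourier_phase i) else 0)) {0..1}"
    by (intro has_integral_mult_right cos_has_integral_01)
  moreover have "(if fourier_freq i = 0 then cos (- fourier_phase i) else 0) = 0"
    unfolding fourier_freq_def fourier_phase_def by (auto; presburger)
  ultimately show ?thesis
    unfolding fourier_e_eq_cos[abs_def] by simp
qed

lemma fourier_e_orthonormal: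
  assumes "i \<ge> 1" "j \<ge> 1"
  shows "((\<lambda>t. fourier_e i t * fourier_e j t) has_integral (if i = j then 1 else 0)) {0..1}"
proof -
  define k l where "k = int (fourier_freq i)" and "l = int (fourier_freq j)"
  define p q where "p = fourier_phase i" and "q = fourier_phase j"
  have "k + l \<noteq> 0" using assms by (simp add: k_def l_def fourier_freq_def)
  have sqrt2: "sqrt 2 * (sqrt 2 * x) = 2 * x" for x :: real
    by (simp add: mult.assoc[symmetric])
  have "fourier_e i t * fourier_e j t
      = cos (2 * pi * of_int (k - l) * t + (q - p)) + cos (2 * pi * of_int (k + l) * t + - (p + q))" for t
    unfolding fourier_e_eq_cos k_def l_def p_def q_def
    by (simp add: cos_times_cos algebra_simps sqrt2)
  moreover have "((\<lambda>t. cos (2 * pi * of_int (k - l) * t + (q - p)) + cos (2 * pi * of_int (k + l) * t + - (p + q)))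
      has_integral (if k - l = 0 then cos (q - p) else 0) + 0) {0..1}"
    using cos_has_integral_01[of "k + l"] \<open>k + l \<noteq> 0\<close> by (intro has_integral_add cos_has_integral_01) auto
  moreover have "(if k - l = 0 then cos (q - p) else 0) = (if i = j then 1 else 0)"
    using assms unfolding k_def l_def p_def q_def fourier_freq_def fourier_phase_def by auto presburger+
  ultimately show ?thesis by simp
qed

lemma continuous_on_fourier_e: "continuous_on A (fourier_e i)"
  unfolding fourier_e_eq_cos[abs_def] by (intro continuous_intros)

lemma bounded_measurable01_fourier_sum:
  "bounded_measurable01 (\<lambda>t. \<Sum>i\<in>I. g i * fourier_e i t)"
  by (intro bounded_measurable01_continuous_on continuous_intros
      continuous_on_compose2[OF continuous_on_fourier_e[of UNIV]]) auto

lemma fourier_sum_has_integral: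
  assumes "finite I"
  shows "((\<lambda>t. \<Sum>i\<in>I. g i * fourier_e i t) has_integral 0) {0..1}"
  using has_integral_sum[OF assms, of "\<lambda>i t. g i * fourier_e i t" "\<lambda>i. g i * 0"]
    has_integral_mult_right[OF fourier_e_has_integral]
  by simp

lemma fourier_sum_square_has_integral:
  assumes "finite I" "I \<subseteq> {1..}"
  shows "((\<lambda>t. (\<Sum>i\<in>I. g i * fourier_e i t)\<^sup>2) has_integral (\<Sum>i\<in>I. (g i)\<^sup>2)) {0..1}"
proof -
  have "((\<lambda>t. \<Sum>i\<in>I. \<Sum>j\<in>I. (g i * g j) * (fourier_e i t * fourier_e j t)) has_integral
      (\<Sum>i\<in>I. \<Sum>j\<in>I. (g i * g j) * (if i = j then 1 else 0))) {0..1}"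
    using assms by (intro has_integral_sum has_integral_mult_right fourier_e_orthonormal) auto
  moreover have "(\<Sum>i\<in>I. g i * fourier_e i s)\<^sup>2
      = (\<Sum>i\<in>I. \<Sum>j\<in>I. (g i * g j) * (fourier_e i s * fourier_e j s))" for s
    by (simp add: power2_eq_square sum_product mult_ac)
  ultimately show ?thesis
    using assms(1) by (simp add: power2_eq_square if_distrib[of "\<lambda>x. _ * x"] cong: if_cong)
qed

lemma mult_fourier_sum_has_integral:
  assumes "bounded_measurable01 a" "finite I"
  shows "((\<lambda>t. a t * (\<Sum>i\<in>I. g i * fourier_e i t)) has_integral
      (\<Sum>i\<in>I. g i * integral {0..1} (\<lambda>t. a t * fourier_e i t))) {0..1}"
proof -
  have "((\<lambda>t. \<Sum>i\<in>I. g i * (a t * fourier_e i t)) has_integral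
      (\<Sum>i\<in>I. g i * integral {0..1} (\<lambda>t. a t * fourier_e i t))) {0..1}"
    using assms by (intro has_integral_sum has_integral_mult_right integrable_integral
        bounded_measurable01_integrable_on bounded_measurable01_mult[OF assms(1)]
        bounded_measurable01_continuous_on continuous_on_fourier_e)
  then show ?thesis by (simp add: sum_distrib_left mult_ac)
qed

lemma cov01_add_fourier_sum:
  fixes g :: "nat \<Rightarrow> real"
  assumes a: "bounded_measurable01 a" and I: "finite I" "I \<subseteq> {1..}"
  defines "S \<equiv> \<lambda>t. \<Sum>i\<in>I. g i * fourier_e i t"
  shows "cov01 (\<lambda>t. a t + S t) (\<lambda>t. a t + S t)
    = cov01 a a + 2 * (\<Sum>i\<in>I. g i * integral {0..1} (\<lambda>t. a t * fourier_e i t)) + (\<Sum>i\<in>I. (g i)\<^sup>2)"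
proof -
  have "integral {0..1} S = 0"
    unfolding S_def using fourier_sum_has_integral[OF I(1)] by (rule integral_unique)
  moreover have "integral {0..1} (\<lambda>t. a t * S t) = (\<Sum>i\<in>I. g i * integral {0..1} (\<lambda>t. a t * fourier_e i t))"
    unfolding S_def using mult_fourier_sum_has_integral[OF a I(1)] by (rule integral_unique)
  moreover have "integral {0..1} (\<lambda>t. S t * S t) = (\<Sum>i\<in>I. (g i)\<^sup>2)"
    unfolding S_def using fourier_sum_square_has_integral[OF I] by (simp add: power2_eq_square integral_unique)
  ultimately show ?thesis
    using cov01_add_self[OF a bounded_measurable01_fourier_sum] unfolding S_def cov01_def by simp
qed

section \<open>Log-derivatives of the operations on Gamma1\<close>

lemma Gamma1_gderiv_bounds:
  assumes "\<phi> \<in> Gamma1"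
  obtains m M where "0 < m" "\<And>t. t \<in> {0..1} \<Longrightarrow> m < gderiv \<phi> t \<and> gderiv \<phi> t < M"
  using assms unfolding Gamma1_def by blast

lemma Gamma1_gderiv_pos: "\<phi> \<in> Gamma1 \<Longrightarrow> t \<in> {0..1} \<Longrightarrow> 0 < gderiv \<phi> t"
  by (metis Gamma1_gderiv_bounds order.strict_trans)

lemma Gamma1_has_integral_gderiv:
  assumes "\<phi> \<in> Gamma1" "t \<in> {0..1}"
  shows "(gderiv \<phi> has_integral \<phi> t) {0..t}"
proof -
  have deriv: "(\<phi> has_vector_derivative gderiv \<phi> s) (at s within {0..1})" if "s \<in> {0..1}" for s
    using assms(1) that unfolding Gamma1_def gderiv_def by (auto intro: vector_derivative_works[THEN iffD1])
  have "(gderiv \<phi> has_integral \<phi> t - \<phi> 0) {0..t}"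
    using assms(2) by (intro fundamental_theorem_of_calculus)
      (auto intro!: has_vector_derivative_within_subset[OF deriv])
  then show ?thesis using assms(1) by (simp add: Gamma1_def)
qed

lemma bounded_measurable01_ln_gderiv:
  assumes "\<phi> \<in> Gamma1"
  shows "bounded_measurable01 (\<lambda>t. ln (gderiv \<phi> t))"
proof -
  obtain m M where m: "0 < m" and mM: "\<And>t. t \<in> {0..1} \<Longrightarrow> m < gderiv \<phi> t \<and> gderiv \<phi> t < M"
    using Gamma1_gderiv_bounds[OF assms] by blast
  have "gderiv \<phi> \<in> borel_measurable (lebesgue_on {0..1})"
    using Gamma1_has_integral_gderiv[OF assms, of 1] by (auto intro: integrable_imp_measurable)
  moreover have "\<bar>ln (gderiv \<phi> t)\<bar> \<le> \<bar>ln m\<bar> + \<bar>ln M\<bar>" if "t \<in> {0..1}" for t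
  proof -
    have "ln m \<le> ln (gderiv \<phi> t)" "ln (gderiv \<phi> t) \<le> ln M"
      using m mM[OF that] by auto
    then show ?thesis by linarith
  qed
  ultimately show ?thesis
    unfolding bounded_measurable01_def by (auto intro!: borel_measurable_ln exI[of _ "\<bar>ln m\<bar> + \<bar>ln M\<bar>"])
qed

definition normalized_primitive :: "(real \<Rightarrow> real) \<Rightarrow> real \<Rightarrow> real" where
  "normalized_primitive q = (\<lambda>t. integral {0..t} q / integral {0..1} q)"

lemma gderiv_normalized_primitive_ae:
  assumes q: "q integrable_on {0..1}"
  obtains N where "negligible N"
    "\<And>t. t \<in> {0..1} - N \<Longrightarrow> gderiv (normalized_primitive q) t = q t / integral {0..1} q"
proof -
  define q0 where "q0 x = (if x \<in> {0..1} then q x else 0)" for x :: real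
  have "q0 integrable_on UNIV"
    unfolding q0_def integrable_restrict_UNIV by (rule q)
  then have "q0 integrable_on {a..b}" for a b
    by (metis box_real(2) integrable_on_subcbox subset_UNIV)
  then obtain N where N: "negligible N" and deriv: "\<And>x. x \<notin> N \<Longrightarrow> 0 < x \<Longrightarrow>
      ((\<lambda>t. integral {0..t} q0) has_real_derivative q0 x) (at x)"
    using indefinite_integral_has_real_derivative_ae by blast
  show ?thesis
  proof (rule that)
    show "negligible (N \<union> {0})" using N by simp
    fix t assume t: "t \<in> {0..1} - (N \<union> {0})"
    have "((\<lambda>s. integral {0..s} q0) has_real_derivative q0 t) (at t)"
      using t by (intro deriv) auto
    moreover have "q0 t = q t" using t by (simp add: q0_def)
    ultimately have "((\<lambda>s. integral {0..s} q0) has_real_derivative q t) (at t within {0..1})"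
      by (simp add: has_field_derivative_at_within)
    then have deriv0: "((\<lambda>s. integral {0..s} q0 / integral {0..1} q) has_vector_derivative
        q t / integral {0..1} q) (at t within {0..1})"
      unfolding has_real_derivative_iff_has_vector_derivative[symmetric] by (rule DERIV_cdivide)
    have eq: "integral {0..s} q0 = integral {0..s} q" if "s \<in> {0..1}" for s
      using that by (intro integral_cong) (auto simp: q0_def)
    have "(normalized_primitive q has_vector_derivative q t / integral {0..1} q)
        (at t within {0..1})"
      unfolding normalized_primitive_def using t eq
      by (intro has_vector_derivative_transform[OF _ _ deriv0]) auto
    then show "gderiv (normalized_primitive q) t = q t / integral {0..1} q"
      unfolding gderiv_def using t by (intro vector_derivative_within_closed_interval) auto
  qed
qed

text \<open>f' = C exp h almost everywhere, i.e. \<^const>\<open>psi\<close> f and h agree up to a constant.\<close>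

definition gderiv_propto_exp :: "(real \<Rightarrow> real) \<Rightarrow> (real \<Rightarrow> real) \<Rightarrow> bool" where
  "gderiv_propto_exp f h \<longleftrightarrow> (\<exists>N c. negligible N \<and> (\<forall>t \<in> {0..1} - N. gderiv f t = exp (h t + c)))"

lemma normalized_primitive_gderiv_propto_exp:
  assumes h: "bounded_measurable01 h" and N: "negligible N"
    and q: "\<And>s. s \<in> {0..1} - N \<Longrightarrow> q s = exp (h s + c)"
  shows "gderiv_propto_exp (normalized_primitive q) h"
proof -
  have e: "bounded_measurable01 (\<lambda>s. exp (h s + c))"
    using h by (intro bounded_measurable01_exp bounded_measurable01_add bounded_measurable01_const)
  have q_int: "q integrable_on {0..1}"
    using q by (intro integrable_spike[OF bounded_measurable01_integrable_on[OF e] N]) auto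
  obtain B where B: "\<And>s. s \<in> {0..1} \<Longrightarrow> \<bar>h s\<bar> \<le> B"
    using h unfolding bounded_measurable01_def by blast
  have "exp (- B + c) \<le> exp (h s + c)" if "s \<in> {0..1}" for s
    using B[OF that] by simp
  then have "exp (- B + c) \<le> integral {0..1} (\<lambda>s. exp (h s + c))"
    by (rule integral_ge_const01[OF e])
  moreover have "integral {0..1} q = integral {0..1} (\<lambda>s. exp (h s + c))"
    using q by (intro integral_spike[OF N]) auto
  ultimately have Z: "0 < integral {0..1} q"
    by (smt (verit) exp_gt_zero)
  obtain N' where N': "negligible N'"
    and deriv: "\<And>t. t \<in> {0..1} - N' \<Longrightarrow> gderiv (normalized_primitive q) t = q t / integral {0..1} q"
    using gderiv_normalized_primitive_ae[OF q_int] by blast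
  have "gderiv (normalized_primitive q) t = exp (h t + (c - ln (integral {0..1} q)))"
    if "t \<in> {0..1} - (N \<union> N')" for t
    using deriv[of t] q[of t] that Z by (simp add: exp_add exp_diff)
  then show ?thesis
    unfolding gderiv_propto_exp_def using N N' by (metis negligible_Un)
qed

lemma gplus_gderiv_propto_exp:
  assumes "bounded_measurable01 hf" "bounded_measurable01 hg"
    and "gderiv_propto_exp f hf" "gderiv_propto_exp g hg"
  shows "gderiv_propto_exp (gplus f g) (\<lambda>t. hf t + hg t)"
proof -
  obtain Nf cf Ng cg where "negligible Nf" "\<forall>t \<in> {0..1} - Nf. gderiv f t = exp (hf t + cf)"
    and "negligible Ng" "\<forall>t \<in> {0..1} - Ng. gderiv g t = exp (hg t + cg)"
    using assms(3,4) unfolding gderiv_propto_exp_def by blast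
  then have "gderiv f s * gderiv g s = exp (hf s + hg s + (cf + cg))" if "s \<in> {0..1} - (Nf \<union> Ng)" for s
    using that by (simp add: exp_add[symmetric] algebra_simps)
  then show ?thesis
    unfolding gplus_def normalized_primitive_def[symmetric]
    using assms(1,2) \<open>negligible Nf\<close> \<open>negligible Ng\<close>
    by (intro normalized_primitive_gderiv_propto_exp[where N = "Nf \<union> Ng" and c = "cf + cg"] bounded_measurable01_add) auto
qed

lemma gscale_gderiv_propto_exp:
  assumes "\<phi> \<in> Gamma1"
  shows "gderiv_propto_exp (gscale \<alpha> \<phi>) (\<lambda>t. \<alpha> * ln (gderiv \<phi> t))"
proof -
  have "gderiv \<phi> s powr \<alpha> = exp (\<alpha> * ln (gderiv \<phi> s) + 0)" if "s \<in> {0..1}" for s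
    using Gamma1_gderiv_pos[OF assms, of s] that by (simp add: powr_def mult.commute)
  then show ?thesis
    unfolding gscale_def normalized_primitive_def[symmetric]
    using bounded_measurable01_ln_gderiv[OF assms]
    by (intro normalized_primitive_gderiv_propto_exp[where N = "{}"] bounded_measurable01_mult
        bounded_measurable01_const) auto
qed

lemma gminus_gderiv_propto_exp:
  assumes "bounded_measurable01 h" "gderiv_propto_exp f h" "\<phi> \<in> Gamma1"
  shows "gderiv_propto_exp (gminus f \<phi>) (\<lambda>t. h t - ln (gderiv \<phi> t))"
proof -
  have "bounded_measurable01 (\<lambda>t. -1 * ln (gderiv \<phi> t))"
    using assms(3) by (intro bounded_measurable01_mult bounded_measurable01_const bounded_measurable01_ln_gderiv)
  from gplus_gderiv_propto_exp[OF assms(1) this assms(2) gscale_gderiv_propto_exp[OF assms(3)]]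
  show ?thesis by (simp add: gminus_def)
qed

lemma wMZW_gderiv_propto_exp:
  assumes "\<phi> \<in> Gamma1"
  shows "gderiv_propto_exp (wMZW \<phi> G m \<omega>)
    (\<lambda>t. ln (gderiv \<phi> t) + (\<Sum>i=1..m. G i \<omega> * fourier_e i t))"
proof -
  have "gderiv \<phi> s * exp (\<Sum>i=1..m. G i \<omega> * fourier_e i s)
      = exp (ln (gderiv \<phi> s) + (\<Sum>i=1..m. G i \<omega> * fourier_e i s) + 0)" if "s \<in> {0..1}" for s
    using Gamma1_gderiv_pos[OF assms, of s] that by (simp add: exp_add)
  then show ?thesis
    unfolding wMZW_def normalized_primitive_def[symmetric]
    using bounded_measurable01_ln_gderiv[OF assms]
    by (intro normalized_primitive_gderiv_propto_exp[where N = "{}"] bounded_measurable01_add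
        bounded_measurable01_fourier_sum) auto
qed

lemma gnorm_sq_eq_cov01:
  assumes h: "bounded_measurable01 h" and "gderiv_propto_exp f h"
  shows "gnorm_sq f = cov01 h h"
proof -
  obtain N c where "negligible N" and "\<forall>t \<in> {0..1} - N. gderiv f t = exp (h t + c)"
    using assms(2) unfolding gderiv_propto_exp_def by blast
  then have "cov01 (\<lambda>t. ln (gderiv f t)) (\<lambda>t. ln (gderiv f t)) = cov01 (\<lambda>t. h t + c) (\<lambda>t. h t + c)"
    by (intro cov01_cong_ae) auto
  also have "\<dots> = cov01 h h"
    using cov01_add_self[OF h bounded_measurable01_const] by simp
  finally show ?thesis by (simp add: gnorm_sq_def ginner_def cov01_def)
qed

section \<open>The Frechet mean\<close>

lemma gnorm_sq_gminus_wMZW: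
  assumes \<phi>: "\<phi> \<in> Gamma1" and \<phi>c: "\<phi>c \<in> Gamma1"
  defines "a \<equiv> \<lambda>t. ln (gderiv \<phi> t) - ln (gderiv \<phi>c t)"
  shows "gnorm_sq (gminus (wMZW \<phi> G m \<omega>) \<phi>c) = cov01 a a
    + 2 * (\<Sum>i=1..m. G i \<omega> * integral {0..1} (\<lambda>t. a t * fourier_e i t)) + (\<Sum>i=1..m. (G i \<omega>)\<^sup>2)"
proof -
  define S where "S t = (\<Sum>i=1..m. G i \<omega> * fourier_e i t)" for t
  have a: "bounded_measurable01 a"
    unfolding a_def using \<phi> \<phi>c by (intro bounded_measurable01_diff bounded_measurable01_ln_gderiv)
  have "bounded_measurable01 (\<lambda>t. ln (gderiv \<phi> t) + S t)"
    unfolding S_def using \<phi> by (intro bounded_measurable01_add bounded_measurable01_ln_gderiv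
        bounded_measurable01_fourier_sum)
  then have "gderiv_propto_exp (gminus (wMZW \<phi> G m \<omega>) \<phi>c) (\<lambda>t. ln (gderiv \<phi> t) + S t - ln (gderiv \<phi>c t))"
    using \<phi> \<phi>c unfolding S_def by (intro gminus_gderiv_propto_exp wMZW_gderiv_propto_exp)
  moreover have "(\<lambda>t. ln (gderiv \<phi> t) + S t - ln (gderiv \<phi>c t)) = (\<lambda>t. a t + S t)"
    by (simp add: a_def fun_eq_iff)
  moreover have "bounded_measurable01 (\<lambda>t. a t + S t)"
    unfolding S_def using a by (intro bounded_measurable01_add bounded_measurable01_fourier_sum)
  ultimately have "gnorm_sq (gminus (wMZW \<phi> G m \<omega>) \<phi>c) = cov01 (\<lambda>t. a t + S t) (\<lambda>t. a t + S t)"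
    by (simp add: gnorm_sq_eq_cov01)
  also have "\<dots> = cov01 a a
      + 2 * (\<Sum>i=1..m. G i \<omega> * integral {0..1} (\<lambda>t. a t * fourier_e i t)) + (\<Sum>i=1..m. (G i \<omega>)\<^sup>2)"
    unfolding S_def by (rule cov01_add_fourier_sum[OF a]) auto
  finally show ?thesis .
qed

lemma Gamma1_eq_if_gderiv_proportional_ae:
  assumes \<phi>: "\<phi> \<in> Gamma1" and \<phi>c: "\<phi>c \<in> Gamma1" and N: "negligible N"
    and proportional: "\<And>s. s \<in> {0..1} - N \<Longrightarrow> gderiv \<phi> s = c * gderiv \<phi>c s"
    and t: "t \<in> {0..1}"
  shows "\<phi>c t = \<phi> t"
proof -
  have scaled: "\<phi> s = c * \<phi>c s" if "s \<in> {0..1}" for s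
  proof -
    have "((\<lambda>x. c * gderiv \<phi>c x) has_integral c * \<phi>c s) {0..s}"
      by (rule has_integral_mult_right[OF Gamma1_has_integral_gderiv[OF \<phi>c that]])
    then have "(gderiv \<phi> has_integral c * \<phi>c s) {0..s}"
      by (rule has_integral_spike[OF N, rotated]) (use proportional that in auto)
    then show ?thesis
      using Gamma1_has_integral_gderiv[OF \<phi> that] by (rule has_integral_unique[symmetric])
  qed
  have "c = 1"
    using scaled[of 1] \<phi> \<phi>c by (simp add: Gamma1_def)
  then show ?thesis using scaled[OF t] by simp
qed

lemma Gamma1_eq_or_cov01_ln_gderiv_pos:
  assumes \<phi>: "\<phi> \<in> Gamma1" and \<phi>c: "\<phi>c \<in> Gamma1"
  defines "a \<equiv> \<lambda>t. ln (gderiv \<phi> t) - ln (gderiv \<phi>c t)"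
  shows "(\<forall>t\<in>{0..1}. \<phi>c t = \<phi> t) \<or> 0 < cov01 a a"
proof -
  have a: "bounded_measurable01 a"
    unfolding a_def using \<phi> \<phi>c by (intro bounded_measurable01_diff bounded_measurable01_ln_gderiv)
  show ?thesis
  proof (cases "cov01 a a = 0")
    case True
    then obtain N where N: "negligible N" and const: "\<And>s. s \<in> {0..1} - N \<Longrightarrow> a s = integral {0..1} a"
      using cov01_self_eq_0_imp_const_ae[OF a] by blast
    have "gderiv \<phi> s = exp (integral {0..1} a) * gderiv \<phi>c s" if s: "s \<in> {0..1} - N" for s
    proof -
      have "exp (ln (gderiv \<phi> s)) = exp (integral {0..1} a + ln (gderiv \<phi>c s))"
        using const[OF s] by (simp add: a_def)
      then show ?thesis
        using Gamma1_gderiv_pos[OF \<phi>, of s] Gamma1_gderiv_pos[OF \<phi>c, of s] s by (simp add: exp_add)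
    qed
    then show ?thesis
      using Gamma1_eq_if_gderiv_proportional_ae[OF \<phi> \<phi>c N] by blast
  next
    case False
    then show ?thesis using cov01_self_nonneg[OF a] by simp
  qed
qed

lemma (in prob_space) expectation_centered_quadratic:
  fixes G :: "nat \<Rightarrow> 'a \<Rightarrow> real"
  assumes "finite I" and "\<And>i. i \<in> I \<Longrightarrow> G i \<in> borel_measurable M"
    and "\<And>i. i \<in> I \<Longrightarrow> integrable M (\<lambda>x. (G i x)\<^sup>2)" and "\<And>i. i \<in> I \<Longrightarrow> expectation (G i) = 0"
  shows "integrable M (\<lambda>x. K + 2 * (\<Sum>i\<in>I. G i x * c i) + (\<Sum>i\<in>I. (G i x)\<^sup>2))"
    and "expectation (\<lambda>x. K + 2 * (\<Sum>i\<in>I. G i x * c i) + (\<Sum>i\<in>I. (G i x)\<^sup>2))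
      = K + (\<Sum>i\<in>I. expectation (\<lambda>x. (G i x)\<^sup>2))"
proof -
  have "integrable M (G i)" if "i \<in> I" for i
    using assms(2,3)[OF that] by (rule square_integrable_imp_integrable)
  then have lin: "integrable M (\<lambda>x. \<Sum>i\<in>I. G i x * c i)"
    and sq: "integrable M (\<lambda>x. \<Sum>i\<in>I. (G i x)\<^sup>2)"
    using assms(3) by auto
  then show "integrable M (\<lambda>x. K + 2 * (\<Sum>i\<in>I. G i x * c i) + (\<Sum>i\<in>I. (G i x)\<^sup>2))"
    by auto
  have "expectation (\<lambda>x. \<Sum>i\<in>I. G i x * c i) = 0"
    using \<open>\<And>i. i \<in> I \<Longrightarrow> integrable M (G i)\<close> assms(4) by (simp add: Bochner_Integration.integral_sum)
  then show "expectation (\<lambda>x. K + 2 * (\<Sum>i\<in>I. G i x * c i) + (\<Sum>i\<in>I. (G i x)\<^sup>2))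
      = K + (\<Sum>i\<in>I. expectation (\<lambda>x. (G i x)\<^sup>2))"
    using lin sq assms(3) by (simp add: Bochner_Integration.integral_sum prob_space)
qed

lemma (in prob_space) expectation_gnorm_sq_gminus_wMZW:
  fixes G :: "nat \<Rightarrow> 'a \<Rightarrow> real"
  assumes "\<phi> \<in> Gamma1" "\<phi>c \<in> Gamma1"
    and "\<And>i. i \<in> {1..m} \<Longrightarrow> G i \<in> borel_measurable M"
    and "\<And>i. i \<in> {1..m} \<Longrightarrow> integrable M (\<lambda>x. (G i x)\<^sup>2)"
    and "\<And>i. i \<in> {1..m} \<Longrightarrow> expectation (G i) = 0"
  defines "a \<equiv> \<lambda>t. ln (gderiv \<phi> t) - ln (gderiv \<phi>c t)"
  shows "integrable M (\<lambda>\<omega>. gnorm_sq (gminus (wMZW \<phi> G m \<omega>) \<phi>c))"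
    and "expectation (\<lambda>\<omega>. gnorm_sq (gminus (wMZW \<phi> G m \<omega>) \<phi>c))
      = cov01 a a + (\<Sum>i=1..m. expectation (\<lambda>x. (G i x)\<^sup>2))"
  using expectation_centered_quadratic[of "{1..m}" G, OF _ assms(3-5)]
  unfolding gnorm_sq_gminus_wMZW[OF assms(1,2)] a_def by simp_all

lemma l2_norm_sq_Xm_minus_psi:
  "l2_norm_sq (\<lambda>t. Xm \<phi> G m \<omega> t - psi \<phi> t) = (\<Sum>i=1..m. (G i \<omega>)\<^sup>2)"
  unfolding l2_norm_sq_def Xm_def
  using fourier_sum_square_has_integral[of "{1..m}" "\<lambda>i. G i \<omega>"] by (simp add: integral_unique)

lemma (in prob_space) expectation_l2_norm_sq_Xm_minus_psi:
  fixes G :: "nat \<Rightarrow> 'a \<Rightarrow> real"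
  assumes "\<And>i. i \<in> {1..m} \<Longrightarrow> G i \<in> borel_measurable M"
    and "\<And>i. i \<in> {1..m} \<Longrightarrow> integrable M (\<lambda>x. (G i x)\<^sup>2)"
    and "\<And>i. i \<in> {1..m} \<Longrightarrow> expectation (G i) = 0"
  shows "expectation (\<lambda>\<omega>. l2_norm_sq (\<lambda>t. Xm \<phi> G m \<omega> t - psi \<phi> t))
    = (\<Sum>i=1..m. expectation (\<lambda>x. (G i x)\<^sup>2))"
  using expectation_centered_quadratic(2)[of "{1..m}" G 0 "\<lambda>_. 0", OF _ assms]
  unfolding l2_norm_sq_Xm_minus_psi by simp

theorem proposition2:
  fixes M :: "'a measure" and m :: nat and \<theta> :: real and \<phi> :: "real \<Rightarrow> real"
    and v :: "nat \<Rightarrow> real" and G :: "nat \<Rightarrow> 'a \<Rightarrow> real"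
  assumes "prob_space M"
    and "m \<ge> 1" and "\<theta> > 0" and "\<phi> \<in> Gamma1"
    and "\<forall>i\<ge>1. v i > 0" and "summable v"
    and "\<forall>i\<in>{1..m}. G i \<in> borel_measurable M"
    and "\<forall>i\<in>{1..m}. integrable M (\<lambda>x. (G i x)\<^sup>2)"
    and "\<forall>i\<in>{1..m}. (\<integral>x. G i x \<partial>M) = 0"
    and "\<forall>i\<in>{1..m}. (\<integral>x. (G i x - (\<integral>y. G i y \<partial>M))\<^sup>2 \<partial>M) = v i / (1 + \<theta>)"
  shows "(\<forall>\<phi>c\<in>Gamma1. integrable M (\<lambda>\<omega>. gnorm_sq (gminus (wMZW \<phi> G m \<omega>) \<phi>c)))
    \<and> (\<forall>\<phi>c\<in>Gamma1. (\<forall>t\<in>{0..1}. \<phi>c t = \<phi> t)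
          \<or> (\<integral>\<omega>. gnorm_sq (gminus (wMZW \<phi> G m \<omega>) \<phi>) \<partial>M)
              < (\<integral>\<omega>. gnorm_sq (gminus (wMZW \<phi> G m \<omega>) \<phi>c) \<partial>M))
    \<and> (\<integral>\<omega>. gnorm_sq (gminus (wMZW \<phi> G m \<omega>) \<phi>) \<partial>M)
        = (\<integral>\<omega>. l2_norm_sq (\<lambda>t. Xm \<phi> G m \<omega> t - psi \<phi> t) \<partial>M)
    \<and> (\<integral>\<omega>. l2_norm_sq (\<lambda>t. Xm \<phi> G m \<omega> t - psi \<phi> t) \<partial>M)
        = (1 / (1 + \<theta>)) * (\<Sum>i=1..m. v i)"
proof -
  interpret prob_space M by (rule assms(1))
  note G = assms(7-9)[rule_format]
  have variance: "(\<Sum>i=1..m. expectation (\<lambda>x. (G i x)\<^sup>2)) = 1 / (1 + \<theta>) * (\<Sum>i=1..m. v i)"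
    using assms(9,10) by (simp add: sum_divide_distrib)
  show ?thesis
    using expectation_gnorm_sq_gminus_wMZW[OF assms(4) _ G] Gamma1_eq_or_cov01_ln_gderiv_pos[OF assms(4)]
      expectation_gnorm_sq_gminus_wMZW(2)[OF assms(4) assms(4) G]
      expectation_l2_norm_sq_Xm_minus_psi[OF G] variance
    by auto
qed

end
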